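(* Let $V$ be a finite-dimensional real vector space, $M$ a smooth manifold, $f\colon M\to V$ a smooth function, and $x_1,\ldots,x_m$ points of $M$ such that $0$ lies in the interior of the convex hull of $f(x_1),\ldots,f(x_m)$ and \[V=df_{x_1}T_{x_1}(M)+\cdots+df_{x_m}T_{x_m}(M).\] Then, for all $n$ sufficiently large, there exist $z_1,\ldots,z_n\in M$ such that $\sum_{i=1}^n f(z_i)=0$ and \[V=df_{z_1}T_{z_1}(M)+\cdots+df_{z_n}T_{z_n}(M).\]
   Context: Here $df_x\colon T_x(M)\to V$ denotes the differential of $f$ at $x$. *)

theory Defs
  imports "HOL-Analysis.Analysis"
begin

text \<open>D vs x is the iterated derivative
  of order length vs at x, applied to the directions in vs.\<close>
definition smooth_on :: "'a::euclidean_space set \<Rightarrow> ('a \<Rightarrow> 'b::euclidean_space) \<Rightarrow> bool" where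
  "smooth_on S f \<longleftrightarrow> open S \<and>
     (\<exists>D :: 'a list \<Rightarrow> 'a \<Rightarrow> 'b.
        (\<forall>x\<in>S. D [] x = f x) \<and>
        (\<forall>vs. \<forall>x\<in>S. (D vs has_derivative (\<lambda>h. D (h # vs) x)) (at x)))"

definition chart :: "'m topology \<Rightarrow> ('m set \<times> ('m \<Rightarrow> 'e::euclidean_space)) \<Rightarrow> bool" where
  "chart X c \<longleftrightarrow> openin X (fst c) \<and> open (snd c ` fst c) \<and>
     homeomorphic_map (subtopology X (fst c)) (top_of_set (snd c ` fst c)) (snd c)"

definition smooth_atlas :: "'m topology \<Rightarrow> ('m set \<times> ('m \<Rightarrow> 'e::euclidean_space)) set \<Rightarrow> bool" where
  "smooth_atlas X A \<longleftrightarrow> (\<forall>c\<in>A. chart X c) \<and> (\<Union>c\<in>A. fst c) = topspace X \<and>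
     (\<forall>c\<in>A. \<forall>d\<in>A. smooth_on (snd c ` (fst c \<inter> fst d)) (snd d \<circ> inv_into (fst c) (snd c)))"

definition smooth_manifold :: "'m topology \<Rightarrow> ('m set \<times> ('m \<Rightarrow> 'e::euclidean_space)) set \<Rightarrow> bool" where
  "smooth_manifold X A \<longleftrightarrow> Hausdorff_space X \<and> second_countable X \<and> smooth_atlas X A"

definition smooth_map :: "'m topology \<Rightarrow> ('m set \<times> ('m \<Rightarrow> 'e::euclidean_space)) set
    \<Rightarrow> ('m \<Rightarrow> 'v::euclidean_space) \<Rightarrow> bool" where
  "smooth_map X A f \<longleftrightarrow> (\<forall>c\<in>A. smooth_on (snd c ` fst c) (f \<circ> inv_into (fst c) (snd c)))"

text \<open>The image df_x(T_x M) of the differential, computed in a chart around x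
  (independent of the chart by smooth compatibility).\<close>
definition diff_image :: "('m set \<times> ('m \<Rightarrow> 'e::euclidean_space)) set
    \<Rightarrow> ('m \<Rightarrow> 'v::euclidean_space) \<Rightarrow> 'm \<Rightarrow> 'v set" where
  "diff_image A f x = {y. \<exists>c\<in>A. x \<in> fst c \<and> (\<exists>f'.
       ((f \<circ> inv_into (fst c) (snd c)) has_derivative f') (at (snd c x)) \<and> y \<in> range f')}"

end

(*
  Since 0 is interior to the convex hull of the values f(x_i), it is a combination
  0 = sum_i c_i f(x_i) with all c_i > 0.  Rounding the numbers n c_i gives multiplicities
  M_i summing to n whose value sum s = sum_i M_i f(x_i) stays bounded as n grows.

  Because the differentials at the x_i span V, moving d = dim V copies of every x_i along
  suitable curves makes the sum of f over these d m points cover, by the open mapping theorem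
  for maps with surjective derivative, a ball of fixed radius delta around d sum_i f(x_i).
  Choose L with |s| < L delta.  For large n each x_i occurs more than L d times, so L groups
  of d copies of every x_i can be replaced by perturbed groups, each summing to
  d sum_i f(x_i) - s / L; the total then becomes 0, and the remaining unperturbed copy of
  each x_i keeps the differentials spanning V.
*)

theory Submission
  imports Defs
begin

lemma smooth_on_has_derivative:
  assumes "smooth_on S F" "y \<in> S"
  obtains F' where "(F has_derivative F') (at y)"
proof -
  from assms(1) obtain D where "open S" and "\<forall>x\<in>S. D [] x = F x"
    and D: "\<forall>vs. \<forall>x\<in>S. (D vs has_derivative (\<lambda>h. D (h # vs) x)) (at x)"
    unfolding smooth_on_def by blast
  moreover have "(D [] has_derivative (\<lambda>h. D [h] y)) (at y)"
    using D assms(2) by blast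
  ultimately have "(F has_derivative (\<lambda>h. D [h] y)) (at y)"
    using has_derivative_transform_within_open assms(2) by (metis (no_types, lifting))
  then show thesis by (rule that)
qed

lemma smooth_on_imp_continuous_on:
  assumes "smooth_on S F"
  shows "continuous_on S F"
  by (metis assms continuous_at_imp_continuous_on has_derivative_continuous smooth_on_has_derivative)

lemma smooth_manifold_chart:
  assumes "smooth_manifold X A" "c \<in> A"
  shows "fst c \<subseteq> topspace X" "inj_on (snd c) (fst c)" "open (snd c ` fst c)"
proof -
  have "chart X c" using assms unfolding smooth_manifold_def smooth_atlas_def by blast
  then have "openin X (fst c)" "open (snd c ` fst c)"
    and "homeomorphic_map (subtopology X (fst c)) (top_of_set (snd c ` fst c)) (snd c)"
    unfolding chart_def by auto
  then show "fst c \<subseteq> topspace X" "inj_on (snd c) (fst c)" "open (snd c ` fst c)"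
    by (auto dest: homeomorphic_imp_injective_map simp: openin_subset Int_absorb1)
qed

lemma zero_in_diff_image:
  assumes "smooth_manifold X A" "smooth_map X A f" "y \<in> topspace X"
  shows "0 \<in> diff_image A f y"
proof -
  obtain c where c: "c \<in> A" "y \<in> fst c"
    using assms(1,3) unfolding smooth_manifold_def smooth_atlas_def by blast
  moreover obtain F' where "((f \<circ> inv_into (fst c) (snd c)) has_derivative F') (at (snd c y))"
    using assms(2) c smooth_on_has_derivative unfolding smooth_map_def by blast
  moreover from this have "0 \<in> range F'"
    by (metis has_derivative_linear linear_0 rangeI)
  ultimately show ?thesis unfolding diff_image_def by blast
qed

lemma diff_image_velocity_curve:
  assumes "smooth_manifold X A" "smooth_map X A f" "w \<in> diff_image A f y"
  shows "\<exists>(\<gamma> :: real \<Rightarrow> _) T. open T \<and> 0 \<in> T \<and> \<gamma> 0 = y \<and> \<gamma> ` T \<subseteq> topspace X \<and>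
           continuous_on T (f \<circ> \<gamma>) \<and> ((f \<circ> \<gamma>) has_vector_derivative w) (at 0)"
proof -
  obtain c f' u where c: "c \<in> A" "y \<in> fst c" and w: "w = f' u"
    and f': "((f \<circ> inv_into (fst c) (snd c)) has_derivative f') (at (snd c y))"
    using assms(3) unfolding diff_image_def by blast
  define \<psi> where "\<psi> = inv_into (fst c) (snd c)"
  define line where "line s = snd c y + s *\<^sub>R u" for s :: real
  define T where "T = line -` (snd c ` fst c)"
  note chart = smooth_manifold_chart[OF assms(1) c(1)]
  have "continuous_on UNIV line" unfolding line_def by (intro continuous_intros)
  then have "open T" unfolding T_def using chart(3) by (simp add: open_vimage)
  moreover have "0 \<in> T" unfolding T_def line_def using c(2) by simp
  moreover have "(\<psi> \<circ> line) 0 = y" unfolding \<psi>_def line_def using chart(2) c(2) by simp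
  moreover have "(\<psi> \<circ> line) ` T \<subseteq> topspace X"
    unfolding T_def \<psi>_def using chart(1) inv_into_into[of _ "snd c" "fst c"] by fastforce
  moreover have "continuous_on T (f \<circ> \<psi> \<circ> line)"
  proof (rule continuous_on_compose)
    show "continuous_on T line" unfolding line_def by (intro continuous_intros)
    have "smooth_on (snd c ` fst c) (f \<circ> \<psi>)"
      using assms(2) c(1) unfolding smooth_map_def \<psi>_def by blast
    then show "continuous_on (line ` T) (f \<circ> \<psi>)"
      unfolding T_def by (rule continuous_on_subset[OF smooth_on_imp_continuous_on]) auto
  qed
  moreover have "((f \<circ> \<psi> \<circ> line) has_vector_derivative w) (at 0)"
  proof -
    have "(line has_derivative (\<lambda>s. s *\<^sub>R u)) (at 0)"
      unfolding line_def by (auto intro!: derivative_eq_intros)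
    moreover have "(f \<circ> \<psi> has_derivative f') (at (line 0))" using f' unfolding \<psi>_def line_def by simp
    ultimately have "(f \<circ> \<psi> \<circ> line has_derivative (\<lambda>s. f' (s *\<^sub>R u))) (at 0)"
      using has_derivative_compose by (fastforce simp: o_def)
    moreover have "f' (s *\<^sub>R u) = s *\<^sub>R w" for s
      using f' w by (simp add: has_derivative_linear linear_scale)
    ultimately show ?thesis by (simp add: has_vector_derivative_def)
  qed
  ultimately show ?thesis by (metis comp_assoc)
qed

lemma sum_of_curves_covers_ball:
  fixes \<phi> :: "'k \<Rightarrow> real \<Rightarrow> 'v::euclidean_space" and e w :: "'k \<Rightarrow> 'v"
  assumes "finite K"
    and curves: "\<And>k. k \<in> K \<Longrightarrow> open (T k) \<and> 0 \<in> T k \<and> continuous_on (T k) (\<phi> k) \<and>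
                    (\<phi> k has_vector_derivative w k) (at 0)"
    and frame: "\<And>h. (\<Sum>k\<in>K. (h \<bullet> e k) *\<^sub>R w k) = h"
  obtains \<delta> where "\<delta> > 0"
    "\<And>g. g \<in> ball (\<Sum>k\<in>K. \<phi> k 0) \<delta> \<Longrightarrow>
       \<exists>t. (\<forall>k\<in>K. t \<bullet> e k \<in> T k) \<and> (\<Sum>k\<in>K. \<phi> k (t \<bullet> e k)) = g"
proof -
  define S where "S = (\<Inter>k\<in>K. (\<lambda>t. t \<bullet> e k) -` T k)"
  define G where "G t = (\<Sum>k\<in>K. \<phi> k (t \<bullet> e k))" for t
  have "open S"
    unfolding S_def using assms(1) curves by (auto intro!: open_vimage continuous_intros)
  moreover have "0 \<in> S" unfolding S_def using curves by simp
  moreover have "continuous_on S G"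
    unfolding G_def S_def
  proof (intro continuous_on_sum)
    fix k assume "k \<in> K"
    then show "continuous_on (\<Inter>k\<in>K. (\<lambda>t. t \<bullet> e k) -` T k) (\<lambda>t. \<phi> k (t \<bullet> e k))"
      using curves[OF \<open>k \<in> K\<close>] continuous_on_inner[OF continuous_on_id continuous_on_const]
      by (force intro: continuous_on_compose2[of "T k" "\<phi> k"])
  qed
  moreover have "(G has_derivative id) (at 0)"
  proof -
    have "(G has_derivative (\<lambda>h. \<Sum>k\<in>K. (h \<bullet> e k) *\<^sub>R w k)) (at 0)"
      unfolding G_def
    proof (intro has_derivative_sum)
      fix k assume "k \<in> K"
      then have "(\<phi> k has_derivative (\<lambda>s. s *\<^sub>R w k)) (at ((\<lambda>t. t \<bullet> e k) 0))"
        using curves by (simp add: has_vector_derivative_def)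
      then show "((\<lambda>t. \<phi> k (t \<bullet> e k)) has_derivative (\<lambda>h. (h \<bullet> e k) *\<^sub>R w k)) (at 0)"
        using has_derivative_compose[OF bounded_linear_inner_left[THEN
            bounded_linear_imp_has_derivative]] by blast
    qed
    then show ?thesis using frame by (simp add: id_def)
  qed
  ultimately have "G 0 \<in> interior (G ` S)"
    by (intro sussmann_open_mapping[where g' = id]) (auto simp: interior_open)
  then obtain \<delta> where "\<delta> > 0" and ball: "ball (G 0) \<delta> \<subseteq> G ` S"
    by (meson open_contains_ball open_interior interior_subset subset_trans)
  show thesis
  proof (rule that[OF \<open>\<delta> > 0\<close>])
    fix g assume "g \<in> ball (\<Sum>k\<in>K. \<phi> k 0) \<delta>"
    then obtain t where "t \<in> S" "g = G t" using ball unfolding G_def by auto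
    then show "\<exists>t. (\<forall>k\<in>K. t \<bullet> e k \<in> T k) \<and> (\<Sum>k\<in>K. \<phi> k (t \<bullet> e k)) = g"
      unfolding S_def G_def by blast
  qed
qed

lemma sums_near_repeated_points_cover_ball:
  fixes f :: "'m \<Rightarrow> 'v::euclidean_space" and x :: "'i \<Rightarrow> 'm"
  assumes "smooth_manifold X A" "smooth_map X A f" "finite I"
    and span: "\<forall>v. \<exists>w. (\<forall>i\<in>I. w i \<in> diff_image A f (x i)) \<and> v = (\<Sum>i\<in>I. w i)"
  obtains \<delta> where "\<delta> > 0"
    "\<And>g. g \<in> ball (real DIM('v) *\<^sub>R (\<Sum>i\<in>I. f (x i))) \<delta> \<Longrightarrow>
       \<exists>ps. length ps = DIM('v) * card I \<and> set ps \<subseteq> topspace X \<and> sum_list (map f ps) = g"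
proof -
  text \<open>A vector of the image of the differential at x i is only known to be the velocity
    of a curve in some chart, which may depend on the vector.  So x i is moved separately
    for every basis vector b, in the direction W b i, where the W b i sum up to b.\<close>
  define K where "K = (Basis :: 'v set) \<times> I"
  have "finite K" unfolding K_def using assms(3) by simp
  obtain W where W: "\<And>b. (\<forall>i\<in>I. W b i \<in> diff_image A f (x i)) \<and> b = (\<Sum>i\<in>I. W b i)"
    using span by metis
  define curve where "curve k \<gamma> T \<longleftrightarrow> open T \<and> 0 \<in> T \<and> \<gamma> 0 = x (snd k) \<and>
      \<gamma> ` T \<subseteq> topspace X \<and> continuous_on T (f \<circ> \<gamma>) \<and>
      ((f \<circ> \<gamma>) has_vector_derivative W (fst k) (snd k)) (at 0)" for k and \<gamma> :: "real \<Rightarrow> 'm" and T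
  have "\<exists>\<gamma> T. curve k \<gamma> T" if "k \<in> K" for k
    unfolding curve_def
    by (rule diff_image_velocity_curve[OF assms(1,2)]) (use W that in \<open>auto simp: K_def\<close>)
  then obtain \<Gamma> T where curves: "\<And>k. k \<in> K \<Longrightarrow> curve k (\<Gamma> k) (T k)"
    by metis
  have frame: "(\<Sum>k\<in>K. (h \<bullet> fst k) *\<^sub>R W (fst k) (snd k)) = h" for h :: 'v
  proof -
    have "(\<Sum>k\<in>K. (h \<bullet> fst k) *\<^sub>R W (fst k) (snd k)) =
        (\<Sum>b\<in>Basis. (h \<bullet> b) *\<^sub>R (\<Sum>i\<in>I. W b i))"
      unfolding K_def by (simp add: sum.cartesian_product scaleR_sum_right split_def)
    also have "\<dots> = (\<Sum>b\<in>Basis. (h \<bullet> b) *\<^sub>R b)" by (metis W)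
    also have "\<dots> = h" by (rule euclidean_representation)
    finally show ?thesis .
  qed
  obtain \<delta> where "\<delta> > 0" and \<delta>: "\<And>g. g \<in> ball (\<Sum>k\<in>K. (f \<circ> \<Gamma> k) 0) \<delta> \<Longrightarrow>
      \<exists>t. (\<forall>k\<in>K. t \<bullet> fst k \<in> T k) \<and> (\<Sum>k\<in>K. (f \<circ> \<Gamma> k) (t \<bullet> fst k)) = g"
    by (rule sum_of_curves_covers_ball[OF \<open>finite K\<close>, of T "\<lambda>k. f \<circ> \<Gamma> k"
          "\<lambda>k. W (fst k) (snd k)" fst])
      (use curves frame in \<open>auto simp: curve_def\<close>)
  have center: "(\<Sum>k\<in>K. (f \<circ> \<Gamma> k) 0) = real DIM('v) *\<^sub>R (\<Sum>i\<in>I. f (x i))"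
  proof -
    have "(\<Sum>k\<in>K. (f \<circ> \<Gamma> k) 0) = (\<Sum>k\<in>K. f (x (snd k)))"
      using curves unfolding curve_def by (intro sum.cong) auto
    also have "\<dots> = (\<Sum>b\<in>(Basis :: 'v set). \<Sum>i\<in>I. f (x i))"
      unfolding K_def by (simp add: sum.cartesian_product split_def)
    finally show ?thesis by (simp add: sum_constant_scaleR)
  qed
  obtain ks where ks: "distinct ks" "set ks = K" using finite_distinct_list[OF \<open>finite K\<close>] by blast
  show thesis
  proof (rule that[OF \<open>\<delta> > 0\<close>])
    fix g assume "g \<in> ball (real DIM('v) *\<^sub>R (\<Sum>i\<in>I. f (x i))) \<delta>"
    then obtain t where t: "\<forall>k\<in>K. t \<bullet> fst k \<in> T k" "(\<Sum>k\<in>K. f (\<Gamma> k (t \<bullet> fst k))) = g"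
      using \<delta> center by auto
    define ps where "ps = map (\<lambda>k. \<Gamma> k (t \<bullet> fst k)) ks"
    have "length ps = DIM('v) * card I"
      unfolding ps_def using distinct_card[OF ks(1)] ks(2) by (simp add: K_def card_cartesian_product)
    moreover have "set ps \<subseteq> topspace X"
      unfolding ps_def using t(1) curves ks(2) unfolding curve_def by fastforce
    moreover have "sum_list (map f ps) = g"
      unfolding ps_def using t(2) ks by (simp add: sum_list_distinct_conv_sum_set o_def)
    ultimately show "\<exists>ps. length ps = DIM('v) * card I \<and> set ps \<subseteq> topspace X \<and>
        sum_list (map f ps) = g"
      by blast
  qed
qed

lemma interior_convex_hull_positive_weights:
  fixes v :: "'i \<Rightarrow> 'a::euclidean_space"
  assumes "finite I" and "y \<in> interior (convex hull (v ` I))"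
  obtains c where "\<forall>i\<in>I. 0 < c i" "sum c I = 1" "(\<Sum>i\<in>I. c i *\<^sub>R v i) = y"
proof -
  have "(\<Union>i\<in>I. {v i}) = v ` I" by blast
  then have "y \<in> rel_interior (convex hull (\<Union>i\<in>I. {v i}))"
    using assms(2) interior_subset_rel_interior by (metis subsetD)
  then show ?thesis
    using that by (auto simp: rel_interior_convex_hull_union[OF assms(1)])
qed

lemma sums_cover_UNIV_mono:
  fixes S :: "'i \<Rightarrow> 'a::comm_monoid_add set"
  assumes "finite J" "I \<subseteq> J" "\<forall>j\<in>J - I. 0 \<in> S j"
    and "\<forall>v. \<exists>w. (\<forall>i\<in>I. w i \<in> S i) \<and> v = sum w I"
  shows "\<forall>v. \<exists>w. (\<forall>j\<in>J. w j \<in> S j) \<and> v = sum w J"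
proof
  fix v
  obtain w where w: "\<forall>i\<in>I. w i \<in> S i" "v = sum w I" using assms(4) by blast
  define w' where "w' j = (if j \<in> I then w j else 0)" for j
  have "\<forall>j\<in>J. w' j \<in> S j" using w(1) assms(3) unfolding w'_def by auto
  moreover have "sum w' J = sum w I"
    unfolding w'_def using assms(1,2) by (simp add: sum.If_cases Int_absorb1)
  ultimately show "\<exists>w. (\<forall>j\<in>J. w j \<in> S j) \<and> v = sum w J" using w(2) by metis
qed

lemma nat_rounding_with_fixed_sum:
  assumes "finite I" "i0 \<in> I" "\<forall>i\<in>I. 0 \<le> c i" "sum c I = 1"
  obtains M :: "'i \<Rightarrow> nat"
  where "sum M I = n" "\<forall>i\<in>I. \<bar>real (M i) - real n * c i\<bar> \<le> real (card I)"
proof -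
  define R where "R i = nat \<lfloor>real n * c i\<rfloor>" for i
  define I' where "I' = I - {i0}"
  have R: "real (R i) \<le> real n * c i \<and> real n * c i < real (R i) + 1" if "i \<in> I" for i
    using assms(3) that unfolding R_def by (simp add: of_nat_nat)
  have card: "real (card I') + 1 = real (card I)"
  proof -
    have "card I \<ge> 1" using assms(1,2) by (metis One_nat_def card_gt_0_iff empty_iff less_eq_Suc_le)
    then show ?thesis unfolding I'_def using assms(2) by (simp add: of_nat_diff)
  qed
  have split: "sum g I = g i0 + sum g I'" for g :: "'i \<Rightarrow> real"
    unfolding I'_def using assms(1,2) by (simp add: sum.remove)
  define excess where "excess = (\<Sum>i\<in>I'. real n * c i - real (R i))"
  have "0 \<le> excess" unfolding excess_def using R by (auto simp: I'_def intro!: sum_nonneg)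
  have "excess \<le> (\<Sum>i\<in>I'. 1)" unfolding excess_def
    by (rule sum_mono) (use R in \<open>fastforce simp: I'_def\<close>)
  then have "excess \<le> real (card I')" by simp
  have excess_eq: "excess = real n * (1 - c i0) - real (sum R I')"
    using split[of c] assms(4) unfolding excess_def
    by (simp add: sum_subtractf flip: sum_distrib_left)
  moreover have "real n * (1 - c i0) \<le> real n" using assms(2,3) by (simp add: mult_left_le)
  ultimately have "sum R I' \<le> n" using \<open>0 \<le> excess\<close> by linarith
  define M where "M = R(i0 := n - sum R I')"
  have "sum M I' = sum R I'" unfolding M_def I'_def by (intro sum.cong) auto
  then have "sum M I = n"
    using \<open>sum R I' \<le> n\<close> split[of "\<lambda>i. real (M i)"] unfolding M_def by (simp flip: of_nat_sum)
  moreover have "\<bar>real (M i) - real n * c i\<bar> \<le> real (card I)" if "i \<in> I" for i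
  proof (cases "i = i0")
    case True
    then have "real (M i) - real n * c i = excess"
      using \<open>sum R I' \<le> n\<close> excess_eq unfolding M_def by (simp add: of_nat_diff algebra_simps)
    then show ?thesis using \<open>0 \<le> excess\<close> \<open>excess \<le> real (card I')\<close> card by linarith
  next
    case False
    then show ?thesis using R[OF that] card unfolding M_def by simp
  qed
  ultimately show thesis using that by blast
qed

lemma eventually_balanced_multiplicities:
  fixes v :: "'i \<Rightarrow> 'v::real_normed_vector"
  assumes "finite I" "\<forall>i\<in>I. 0 < c i" "sum c I = 1" "(\<Sum>i\<in>I. c i *\<^sub>R v i) = 0"
  shows "\<forall>\<^sub>F n in sequentially. \<exists>M. sum M I = n \<and> (\<forall>i\<in>I. K \<le> M i) \<and>
           norm (\<Sum>i\<in>I. real (M i) *\<^sub>R v i) \<le> real (card I) * (\<Sum>i\<in>I. norm (v i))"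
proof -
  obtain i0 where "i0 \<in> I" using assms(3) by fastforce
  have "\<forall>\<^sub>F n in sequentially. real K + real (card I) \<le> real n * c i" if "i \<in> I" for i
  proof -
    have "filterlim (\<lambda>n. c i * real n) at_top sequentially"
      using assms(2) that
      by (intro filterlim_tendsto_pos_mult_at_top[OF tendsto_const _ filterlim_real_sequentially]) auto
    then show ?thesis by (simp add: filterlim_at_top mult.commute)
  qed
  then have "\<forall>\<^sub>F n in sequentially. \<forall>i\<in>I. real K + real (card I) \<le> real n * c i"
    using assms(1) by (simp add: eventually_ball_finite)
  then show ?thesis
  proof (rule eventually_mono)
    fix n assume large: "\<forall>i\<in>I. real K + real (card I) \<le> real n * c i"
    obtain M where M: "sum M I = n" "\<forall>i\<in>I. \<bar>real (M i) - real n * c i\<bar> \<le> real (card I)"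
      using nat_rounding_with_fixed_sum[OF assms(1) \<open>i0 \<in> I\<close>, of c n] assms(2,3) less_imp_le
      by metis
    have "K \<le> M i" if "i \<in> I" for i
      using M(2)[rule_format, OF that] large[rule_format, OF that] by linarith
    moreover have "norm (\<Sum>i\<in>I. real (M i) *\<^sub>R v i) \<le> real (card I) * (\<Sum>i\<in>I. norm (v i))"
    proof -
      have "(\<Sum>i\<in>I. (real n * c i) *\<^sub>R v i) = real n *\<^sub>R (\<Sum>i\<in>I. c i *\<^sub>R v i)"
        by (simp add: scaleR_sum_right)
      then have "(\<Sum>i\<in>I. real (M i) *\<^sub>R v i) = (\<Sum>i\<in>I. (real (M i) - real n * c i) *\<^sub>R v i)"
        using assms(4) by (simp add: scaleR_diff_left sum_subtractf)
      also have "norm \<dots> \<le> (\<Sum>i\<in>I. real (card I) * norm (v i))"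
        by (intro order_trans[OF norm_sum] sum_mono) (simp add: M(2) mult_right_mono)
      finally show ?thesis by (simp add: sum_distrib_left)
    qed
    ultimately show "\<exists>M. sum M I = n \<and> (\<forall>i\<in>I. K \<le> M i) \<and>
        norm (\<Sum>i\<in>I. real (M i) *\<^sub>R v i) \<le> real (card I) * (\<Sum>i\<in>I. norm (v i))"
      using M(1) by blast
  qed
qed

lemma sum_list_map_concat:
  "sum_list (map f (concat xss)) = (\<Sum>xs\<leftarrow>xss. sum_list (map f xs))"
  by (induction xss) auto

lemma sum_list_replicate_scaleR: "sum_list (replicate k v) = real k *\<^sub>R (v :: 'a::real_vector)"
  by (induction k) (auto simp: algebra_simps)

lemma zero_sum_list_from_multiplicities:
  fixes f :: "'a \<Rightarrow> 'v::real_normed_vector" and x :: "'i \<Rightarrow> 'a"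
  assumes "finite I"
    and near: "\<And>g. g \<in> ball (real d *\<^sub>R (\<Sum>i\<in>I. f (x i))) \<delta> \<Longrightarrow>
                 \<exists>ps. length ps = d * card I \<and> set ps \<subseteq> T \<and> sum_list (map f ps) = g"
    and "\<forall>i\<in>I. x i \<in> T" "\<forall>i\<in>I. 1 + L * d \<le> M i"
    and small: "norm (\<Sum>i\<in>I. real (M i) *\<^sub>R f (x i)) < real L * \<delta>"
  obtains rest where "card I + length rest = sum M I" "set rest \<subseteq> T"
    "(\<Sum>i\<in>I. f (x i)) + sum_list (map f rest) = 0"
proof -
  define s where "s = (\<Sum>i\<in>I. real (M i) *\<^sub>R f (x i))"
  define center where "center = real d *\<^sub>R (\<Sum>i\<in>I. f (x i))"
  have "L > 0" using small norm_ge_zero[of s] unfolding s_def by (cases L) auto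
  have "dist center (center - s /\<^sub>R real L) < \<delta>"
    using small \<open>L > 0\<close> unfolding s_def by (simp add: dist_norm field_simps)
  then obtain ps where ps: "length ps = d * card I" "set ps \<subseteq> T"
    "sum_list (map f ps) = center - s /\<^sub>R real L"
    using near unfolding center_def mem_ball by blast
  obtain js where "distinct js" "set js = I" using finite_distinct_list[OF assms(1)] by blast
  then have js_sum: "(\<Sum>i\<leftarrow>js. h i) = sum h I" for h :: "'i \<Rightarrow> 'b::comm_monoid_add"
    by (simp add: sum_list_distinct_conv_sum_set)
  text \<open>Of the M i copies of x i, one is kept separately and L d are gathered into L groups
    containing d copies of every point; each group is replaced by the perturbed points ps.\<close>
  define rest where
    "rest = concat (replicate L ps) @ concat (map (\<lambda>i. replicate (M i - 1 - L * d) (x i)) js)"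
  have "length rest = L * (d * card I) + (\<Sum>i\<in>I. M i - 1 - L * d)"
    unfolding rest_def by (simp add: length_concat js_sum ps(1) sum_list_replicate o_def)
  moreover have "sum M I = (\<Sum>i\<in>I. (M i - 1 - L * d) + (1 + L * d))"
    using assms(4) by (intro sum.cong) auto
  ultimately have "card I + length rest = sum M I"
    by (simp only: sum.distrib sum_constant) (simp add: algebra_simps)
  moreover have "set rest \<subseteq> T"
    unfolding rest_def using ps(2) assms(3) \<open>set js = I\<close> by (cases L) auto
  moreover have "(\<Sum>i\<in>I. f (x i)) + sum_list (map f rest) = 0"
  proof -
    have "real (M i - 1 - L * d) = real (M i) - 1 - real L * real d" if "i \<in> I" for i
      using assms(4) that by (simp add: of_nat_diff)
    then have extra: "sum_list (map f (concat (map (\<lambda>i. replicate (M i - 1 - L * d) (x i)) js)))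
        = s - (\<Sum>i\<in>I. f (x i)) - (real L * real d) *\<^sub>R (\<Sum>i\<in>I. f (x i))"
      unfolding s_def sum_list_map_concat
      by (simp add: js_sum sum_list_replicate_scaleR o_def scaleR_diff_left sum_subtractf
          scaleR_sum_right)
    have copies: "sum_list (map f (concat (replicate L ps))) = real L *\<^sub>R (center - s /\<^sub>R real L)"
      unfolding sum_list_map_concat by (simp add: sum_list_replicate_scaleR ps(3))
    have "real L *\<^sub>R (center - s /\<^sub>R real L) = (real L * real d) *\<^sub>R (\<Sum>i\<in>I. f (x i)) - s"
      using \<open>L > 0\<close> unfolding center_def by (simp add: algebra_simps)
    then show ?thesis
      unfolding rest_def map_append sum_list_append extra copies by (simp add: algebra_simps)
  qed
  ultimately show thesis using that by blast
qed

lemma zero_sum_spanning_family_from_list: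
  fixes f :: "'m \<Rightarrow> 'v::euclidean_space"
  assumes "smooth_manifold X A" "smooth_map X A f"
    and "\<forall>i\<in>{1..m}. x i \<in> topspace X"
    and span: "\<forall>v. \<exists>w. (\<forall>i\<in>{1..m}. w i \<in> diff_image A f (x i)) \<and> v = (\<Sum>i=1..m. w i)"
    and "set rest \<subseteq> topspace X" "(\<Sum>i=1..m. f (x i)) + sum_list (map f rest) = 0"
  shows "\<exists>z. (\<forall>i\<in>{1..m + length rest}. z i \<in> topspace X) \<and>
             (\<Sum>i=1..m + length rest. f (z i)) = 0 \<and>
             (\<forall>v. \<exists>w. (\<forall>i\<in>{1..m + length rest}. w i \<in> diff_image A f (z i)) \<and>
                       v = (\<Sum>i=1..m + length rest. w i))"
proof -
  define zs where "zs = map x [1..<m+1] @ rest"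
  define z where "z i = zs ! (i - 1)" for i
  have len: "length zs = m + length rest" unfolding zs_def by simp
  have prefix: "z i = x i" if "i \<in> {1..m}" for i
    using that unfolding z_def zs_def by (auto simp del: upt_Suc simp add: nth_append)
  have top: "z i \<in> topspace X" if "i \<in> {1..m + length rest}" for i
  proof -
    have "set zs \<subseteq> topspace X" unfolding zs_def using assms(3,5) by auto
    then show ?thesis using that len unfolding z_def by (auto intro!: subsetD[OF _ nth_mem])
  qed
  have "(\<Sum>i=1..m + length rest. f (z i)) = sum_list (map f zs)"
    unfolding z_def len[symmetric] sum_list_sum_nth
    using sum.atLeast1_atMost_eq[of "\<lambda>i. f (zs ! (i - 1))"] by (simp add: atLeast0LessThan)
  also have "\<dots> = 0"
    unfolding zs_def using assms(6)
    by (simp del: upt_Suc add: interv_sum_list_conv_sum_set_nat atLeastLessThanSuc_atLeastAtMost)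
  finally have "(\<Sum>i=1..m + length rest. f (z i)) = 0" .
  moreover have "\<forall>v. \<exists>w. (\<forall>i\<in>{1..m + length rest}. w i \<in> diff_image A f (z i)) \<and>
                       v = (\<Sum>i=1..m + length rest. w i)"
  proof (rule sums_cover_UNIV_mono)
    show "\<forall>j\<in>{1..m + length rest} - {1..m}. 0 \<in> diff_image A f (z j)"
      using top zero_in_diff_image[OF assms(1,2)] by auto
    show "\<forall>v. \<exists>w. (\<forall>i\<in>{1..m}. w i \<in> diff_image A f (z i)) \<and> v = sum w {1..m}"
      using span prefix by simp
  qed auto
  ultimately show ?thesis using top by blast
qed

theorem theorem2p10:
  fixes X :: "'m topology"
    and A :: "('m set \<times> ('m \<Rightarrow> 'e::euclidean_space)) set"
    and f :: "'m \<Rightarrow> 'v::euclidean_space"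
    and x :: "nat \<Rightarrow> 'm" and m :: nat
  assumes "smooth_manifold X A"
    and "smooth_map X A f"
    and "\<forall>i\<in>{1..m}. x i \<in> topspace X"
    and "0 \<in> interior (convex hull (f ` x ` {1..m}))"
    and "\<forall>v. \<exists>w. (\<forall>i\<in>{1..m}. w i \<in> diff_image A f (x i)) \<and> v = (\<Sum>i=1..m. w i)"
  shows "\<exists>N. \<forall>n\<ge>N. \<exists>z :: nat \<Rightarrow> 'm.
           (\<forall>i\<in>{1..n}. z i \<in> topspace X) \<and>
           (\<Sum>i=1..n. f (z i)) = 0 \<and>
           (\<forall>v. \<exists>w. (\<forall>i\<in>{1..n}. w i \<in> diff_image A f (z i)) \<and> v = (\<Sum>i=1..n. w i))"
proof -
  obtain c where c: "\<forall>i\<in>{1..m}. 0 < c i" "sum c {1..m} = 1"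
    "(\<Sum>i=1..m. c i *\<^sub>R f (x i)) = 0"
    using interior_convex_hull_positive_weights[of "{1..m}" 0 "\<lambda>i. f (x i)"] assms(4)
    by (auto simp: image_comp)
  obtain \<delta> where "\<delta> > 0"
    and near: "\<And>g. g \<in> ball (real DIM('v) *\<^sub>R (\<Sum>i=1..m. f (x i))) \<delta> \<Longrightarrow>
      \<exists>ps. length ps = DIM('v) * card {1..m} \<and> set ps \<subseteq> topspace X \<and> sum_list (map f ps) = g"
    using sums_near_repeated_points_cover_ball[OF assms(1,2) finite_atLeastAtMost assms(5)] by blast
  define bound where "bound = real m * (\<Sum>i=1..m. norm (f (x i)))"
  obtain L :: nat where L: "bound < real L * \<delta>" using ex_less_of_nat_mult[OF \<open>\<delta> > 0\<close>] by blast
  have multiplicities: "\<forall>\<^sub>F n in sequentially. \<exists>M. sum M {1..m} = n \<and>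
      (\<forall>i\<in>{1..m}. 1 + L * DIM('v) \<le> M i) \<and> norm (\<Sum>i=1..m. real (M i) *\<^sub>R f (x i)) \<le> bound"
    using eventually_balanced_multiplicities[OF finite_atLeastAtMost c] unfolding bound_def by simp
  show ?thesis
    unfolding eventually_sequentially[symmetric]
  proof (rule eventually_mono[OF multiplicities], elim exE conjE)
    fix n M assume M: "sum M {1..m} = n" "\<forall>i\<in>{1..m}. 1 + L * DIM('v) \<le> M i"
      "norm (\<Sum>i=1..m. real (M i) *\<^sub>R f (x i)) \<le> bound"
    then have "norm (\<Sum>i=1..m. real (M i) *\<^sub>R f (x i)) < real L * \<delta>" using L by linarith
    then obtain rest where "card {1..m} + length rest = n" "set rest \<subseteq> topspace X"
      "(\<Sum>i=1..m. f (x i)) + sum_list (map f rest) = 0"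
      using zero_sum_list_from_multiplicities[OF finite_atLeastAtMost near assms(3) M(2)] M(1)
      by blast
    then show "\<exists>z :: nat \<Rightarrow> 'm. (\<forall>i\<in>{1..n}. z i \<in> topspace X) \<and> (\<Sum>i=1..n. f (z i)) = 0 \<and>
        (\<forall>v. \<exists>w. (\<forall>i\<in>{1..n}. w i \<in> diff_image A f (z i)) \<and> v = (\<Sum>i=1..n. w i))"
      using zero_sum_spanning_family_from_list[OF assms(1,2,3,5)] by auto
  qed
qed

end
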